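(* Let $\{M_i\}_{i\in I}$ be a family of complete pointed metric spaces, let $M=\coprod_{i\in I}M_i$ be their metric sum, and let $Y$ be a real Banach space. Then the following are equivalent: (a) $\mathrm{A}(M_i,Y)$ is dense in $\mathrm{Lip}_0(M_i,Y)$ for every $i\in I$; (b) $\mathrm{A}(M,Y)$ is dense in $\mathrm{Lip}_0(M,Y)$.
   Context: Throughout, metric spaces are complete and pointed, with base point $0$. $\mathrm{Lip}_0(M,Y)$ is the Banach space of Lipschitz maps $f:M\to Y$ with $f(0)=0$, normed by $\|f\|=\sup_{p\neq q}\|f(p)-f(q)\|/d(p,q)$. A map $f$ attains its norm toward $y\in Y$ if there is a sequence $(p_n,q_n)$ in $M\times M$ with $p_n\neq q_n$ such that $[f(p_n)-f(q_n)]/d(p_n,q_n)\to y$ and $\|y\|=\|f\|$; $\mathrm{A}(M,Y)$ is the set of $f$ attaining their norm toward some vector. The metric sum $\coprod_{i\in I}M_i$ of pointed metric spaces $(M_i,d_i)$ is the disjoint union of the $M_i$ with all base points identified to a single base point $0$, with metric $d(p,q)=d_i(p,q)$ if $p,q\in M_i$, and $d(p,q)=d_i(p,0)+d_j(0,q)$ if $p\in M_i$, $q\in M_j$, $i\neq j$. *)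

theory Defs
  imports "HOL-Analysis.Analysis"
begin

text \<open>A pointed metric space is given by a carrier set M, a metric d on M
(locale Metric_space) and a base point z in M.\<close>

definition lipnorm :: "'a set \<Rightarrow> ('a \<Rightarrow> 'a \<Rightarrow> real) \<Rightarrow> ('a \<Rightarrow> 'b::real_normed_vector) \<Rightarrow> real" where
  "lipnorm M d f = Sup {norm (f p - f q) / d p q | p q. p \<in> M \<and> q \<in> M \<and> p \<noteq> q}"

text \<open>Lip_0(M,Y): Lipschitz maps on M vanishing at the base point z
(taken to be 0 outside the carrier, so that each map is represented uniquely).\<close>
definition Lip0 :: "'a set \<Rightarrow> ('a \<Rightarrow> 'a \<Rightarrow> real) \<Rightarrow> 'a \<Rightarrow> ('a \<Rightarrow> 'b::real_normed_vector) set" where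
  "Lip0 M d z = {f. f z = 0 \<and> (\<forall>x. x \<notin> M \<longrightarrow> f x = 0) \<and>
      (\<exists>C. \<forall>p\<in>M. \<forall>q\<in>M. norm (f p - f q) \<le> C * d p q)}"

definition attains_toward :: "'a set \<Rightarrow> ('a \<Rightarrow> 'a \<Rightarrow> real) \<Rightarrow> ('a \<Rightarrow> 'b::real_normed_vector) \<Rightarrow> 'b \<Rightarrow> bool" where
  "attains_toward M d f y \<longleftrightarrow>
     (\<exists>p q :: nat \<Rightarrow> 'a. (\<forall>n. p n \<in> M \<and> q n \<in> M \<and> p n \<noteq> q n) \<and>
        ((\<lambda>n. (1 / d (p n) (q n)) *\<^sub>R (f (p n) - f (q n))) \<longlonglongrightarrow> y) \<and>
        norm y = lipnorm M d f)"

definition NA :: "'a set \<Rightarrow> ('a \<Rightarrow> 'a \<Rightarrow> real) \<Rightarrow> 'a \<Rightarrow> ('a \<Rightarrow> 'b::real_normed_vector) set" where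
  "NA M d z = {f \<in> Lip0 M d z. \<exists>y. attains_toward M d f y}"

definition dense_in_Lip0 :: "'a set \<Rightarrow> ('a \<Rightarrow> 'a \<Rightarrow> real) \<Rightarrow> 'a \<Rightarrow> ('a \<Rightarrow> 'b::real_normed_vector) set \<Rightarrow> bool" where
  "dense_in_Lip0 M d z S \<longleftrightarrow>
     (\<forall>f\<in>Lip0 M d z. \<forall>e>0. \<exists>g\<in>S. lipnorm M d (\<lambda>x. f x - g x) < e)"

text \<open>Metric sum of the family (M i, d i, z i), i in I: the base point is None,
a non-base point x of M i is Some (i, x).\<close>
definition msum_carrier :: "'i set \<Rightarrow> ('i \<Rightarrow> 'a set) \<Rightarrow> ('i \<Rightarrow> 'a) \<Rightarrow> ('i \<times> 'a) option set" where
  "msum_carrier I M z = insert None {Some (i, x) | i x. i \<in> I \<and> x \<in> M i \<and> x \<noteq> z i}"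

definition msum_dist :: "('i \<Rightarrow> 'a \<Rightarrow> 'a \<Rightarrow> real) \<Rightarrow> ('i \<Rightarrow> 'a) \<Rightarrow>
    ('i \<times> 'a) option \<Rightarrow> ('i \<times> 'a) option \<Rightarrow> real" where
  "msum_dist d z p q = (case p of
      None \<Rightarrow> (case q of None \<Rightarrow> 0 | Some (j, y) \<Rightarrow> d j (z j) y)
    | Some (i, x) \<Rightarrow> (case q of None \<Rightarrow> d i x (z i)
        | Some (j, y) \<Rightarrow> (if i = j then d i x y else d i x (z i) + d j (z j) y)))"

end

theory Submission
  imports Defs
begin

text \<open>
  The Lipschitz norm of a map on the metric sum is the supremum of the norms of its restrictions
  to the components, and a difference quotient between points of two different components is a
  convex combination of difference quotients towards the base point, one in each component.

  (a) \<Longrightarrow> (b): given F, pick a component M i0 on which F has almost its full norm,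
  approximate the restriction there by a norm-attaining g, and graft g onto a copy of F that is
  scaled down on the other components just enough to stay below the norm of g. The graft attains
  its norm through g.

  (b) \<Longrightarrow> (a): extend f on M i by zero and approximate the extension by a
  norm-attaining G. Quotients of G that do not involve M i are small, so along a sequence of
  quotients whose norms tend to the norm of G, the convex combinations are eventually dominated by
  quotients inside M i; hence the restriction of G to M i attains its norm.
\<close>

definition diff_quot :: "('a \<Rightarrow> 'a \<Rightarrow> real) \<Rightarrow> ('a \<Rightarrow> 'b::real_normed_vector) \<Rightarrow> 'a \<Rightarrow> 'a \<Rightarrow> 'b" where
  "diff_quot d f p q = (1 / d p q) *\<^sub>R (f p - f q)"

lemma attains_toward_iff_diff_quot:
  "attains_toward M d f y \<longleftrightarrow>
     (\<exists>p q. (\<forall>n. p n \<in> M \<and> q n \<in> M \<and> p n \<noteq> q n) \<and>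
        (\<lambda>n. diff_quot d f (p n) (q n)) \<longlonglongrightarrow> y \<and> norm y = lipnorm M d f)"
  by (simp add: attains_toward_def diff_quot_def)

definition lipschitz_with ::
    "'a set \<Rightarrow> ('a \<Rightarrow> 'a \<Rightarrow> real) \<Rightarrow> real \<Rightarrow> ('a \<Rightarrow> 'b::real_normed_vector) \<Rightarrow> bool" where
  "lipschitz_with M d C f \<longleftrightarrow> (\<forall>p\<in>M. \<forall>q\<in>M. norm (f p - f q) \<le> C * d p q)"

lemma Lip0_iff:
  "f \<in> Lip0 M d z \<longleftrightarrow> f z = 0 \<and> (\<forall>x. x \<notin> M \<longrightarrow> f x = 0) \<and> (\<exists>C. lipschitz_with M d C f)"
  by (simp add: Lip0_def lipschitz_with_def)

lemma lipschitz_with_diff: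
  assumes "lipschitz_with M d C f" "lipschitz_with M d C' g"
  shows "lipschitz_with M d (C + C') (\<lambda>x. f x - g x)"
  unfolding lipschitz_with_def
proof (intro ballI)
  fix p q assume "p \<in> M" "q \<in> M"
  have "norm ((f p - g p) - (f q - g q)) \<le> norm (f p - f q) + norm (g p - g q)"
    using norm_triangle_ineq4[of "f p - f q" "g p - g q"] by (simp add: algebra_simps)
  also have "\<dots> \<le> C * d p q + C' * d p q"
    using assms \<open>p \<in> M\<close> \<open>q \<in> M\<close> by (intro add_mono) (auto simp: lipschitz_with_def)
  finally show "norm ((f p - g p) - (f q - g q)) \<le> (C + C') * d p q"
    by (simp add: distrib_right)
qed

lemma lipschitz_with_scaleR:
  assumes "lipschitz_with M d C f"
  shows "lipschitz_with M d (\<bar>c\<bar> * C) (\<lambda>x. c *\<^sub>R f x)"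
  unfolding lipschitz_with_def
proof (intro ballI)
  fix p q assume "p \<in> M" "q \<in> M"
  then have "\<bar>c\<bar> * norm (f p - f q) \<le> \<bar>c\<bar> * (C * d p q)"
    using assms by (intro mult_left_mono) (auto simp: lipschitz_with_def)
  then show "norm (c *\<^sub>R f p - c *\<^sub>R f q) \<le> \<bar>c\<bar> * C * d p q"
    by (simp add: scaleR_diff_right[symmetric] mult.assoc)
qed

lemma lipschitz_with_minus_iff:
  "lipschitz_with M d C (\<lambda>x. - f x) \<longleftrightarrow> lipschitz_with M d C f"
  unfolding lipschitz_with_def by (simp add: norm_minus_commute)

lemma Lip0_diff:
  assumes "f \<in> Lip0 M d z" "g \<in> Lip0 M d z"
  shows "(\<lambda>x. f x - g x) \<in> Lip0 M d z"
proof -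
  obtain C C' where "lipschitz_with M d C f" "lipschitz_with M d C' g"
    using assms by (auto simp: Lip0_iff)
  then have "lipschitz_with M d (C + C') (\<lambda>x. f x - g x)" by (rule lipschitz_with_diff)
  then show ?thesis using assms by (auto simp: Lip0_iff)
qed

lemma Lip0_scaleR:
  assumes "f \<in> Lip0 M d z"
  shows "(\<lambda>x. c *\<^sub>R f x) \<in> Lip0 M d z"
  using assms lipschitz_with_scaleR unfolding Lip0_iff by fastforce

lemma norm_sub_le_of_convex_combination:
  fixes a b v :: "'b::real_normed_vector"
  assumes v: "v = l *\<^sub>R a + (1 - l) *\<^sub>R b" and l: "0 \<le> l" "l \<le> 1"
    and a: "norm a \<le> e" and b: "norm b \<le> K" and eK: "e < K"
  shows "norm (v - b) \<le> (e + K) / (K - e) * (K - norm v)"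
proof -
  have "v - b = l *\<^sub>R (a - b)" using v by (simp add: algebra_simps)
  then have "norm (v - b) = l * norm (a - b)" using l by simp
  also have "\<dots> \<le> l * (e + K)"
    using a b l norm_triangle_ineq4[of a b] by (intro mult_left_mono) auto
  finally have vb: "norm (v - b) \<le> l * (e + K)" .
  have "norm v \<le> l * e + (1 - l) * K"
    using v l a b norm_triangle_ineq[of "l *\<^sub>R a" "(1 - l) *\<^sub>R b"]
      mult_left_mono[OF a, of l] mult_left_mono[OF b, of "1 - l"] by simp
  then have "l \<le> (K - norm v) / (K - e)"
    using eK by (simp add: pos_le_divide_eq algebra_simps)
  moreover have "0 \<le> e + K" using a eK norm_ge_zero[of a] by linarith
  ultimately have "l * (e + K) \<le> (K - norm v) / (K - e) * (e + K)"
    by (rule mult_right_mono)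
  with vb show ?thesis by (simp add: mult.commute)
qed

text \<open>
  The metric sum is not a \<^locale>\<open>Metric_space\<close>: \<^const>\<open>msum_dist\<close> can be
  negative on points outside the carrier. The Lipschitz-norm lemmas only need positivity on the
  carrier.
\<close>

locale pos_dist =
  fixes M :: "'a set" and d :: "'a \<Rightarrow> 'a \<Rightarrow> real"
  assumes dist_pos: "\<And>p q. p \<in> M \<Longrightarrow> q \<in> M \<Longrightarrow> p \<noteq> q \<Longrightarrow> 0 < d p q"
    and dist_self: "\<And>p. p \<in> M \<Longrightarrow> d p p = 0"
begin

lemma lipschitz_with_iff_diff_quot:
  "lipschitz_with M d C f \<longleftrightarrow> (\<forall>p\<in>M. \<forall>q\<in>M. p \<noteq> q \<longrightarrow> norm (diff_quot d f p q) \<le> C)"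
proof -
  have "norm (f p - f q) \<le> C * d p q \<longleftrightarrow> p \<noteq> q \<longrightarrow> norm (diff_quot d f p q) \<le> C"
    if "p \<in> M" "q \<in> M" for p q
    using that dist_pos[OF that] dist_self
    by (cases "p = q") (auto simp: diff_quot_def divide_le_eq mult.commute)
  then show ?thesis unfolding lipschitz_with_def by blast
qed

lemma lipschitz_with_mono:
  assumes "lipschitz_with M d C f" "C \<le> C'"
  shows "lipschitz_with M d C' f"
  unfolding lipschitz_with_def
proof (intro ballI)
  fix p q assume "p \<in> M" "q \<in> M"
  then have "0 \<le> d p q" using dist_pos dist_self by (cases "p = q") (auto intro: less_imp_le)
  then show "norm (f p - f q) \<le> C' * d p q"
    using assms \<open>p \<in> M\<close> \<open>q \<in> M\<close> unfolding lipschitz_with_def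
    by (meson mult_right_mono order_trans)
qed

lemma lipnorm_eq_Sup:
  "lipnorm M d f = Sup {norm (diff_quot d f p q) | p q. p \<in> M \<and> q \<in> M \<and> p \<noteq> q}"
proof -
  have "norm (f p - f q) / d p q = norm (diff_quot d f p q)" if "p \<in> M" "q \<in> M" "p \<noteq> q" for p q
    using dist_pos[OF that] by (simp add: diff_quot_def)
  then have "{norm (f p - f q) / d p q | p q. p \<in> M \<and> q \<in> M \<and> p \<noteq> q}
      = {norm (diff_quot d f p q) | p q. p \<in> M \<and> q \<in> M \<and> p \<noteq> q}"
    by (intro Collect_cong) metis
  then show ?thesis unfolding lipnorm_def by simp
qed

lemma norm_diff_quot_le_lipnorm:
  assumes "lipschitz_with M d C f" "p \<in> M" "q \<in> M" "p \<noteq> q"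
  shows "norm (diff_quot d f p q) \<le> lipnorm M d f"
  unfolding lipnorm_eq_Sup
proof (rule cSup_upper)
  show "bdd_above {norm (diff_quot d f p q) |p q. p \<in> M \<and> q \<in> M \<and> p \<noteq> q}"
  proof (rule bdd_aboveI)
    fix x assume "x \<in> {norm (diff_quot d f p q) |p q. p \<in> M \<and> q \<in> M \<and> p \<noteq> q}"
    then show "x \<le> C" using assms(1) unfolding lipschitz_with_iff_diff_quot by blast
  qed
qed (use assms in blast)

lemma lipschitz_with_lipnorm:
  assumes "lipschitz_with M d C f"
  shows "lipschitz_with M d (lipnorm M d f) f"
  unfolding lipschitz_with_iff_diff_quot using norm_diff_quot_le_lipnorm[OF assms] by blast

lemma lipschitz_with_lipnorm_if_Lip0:
  assumes "f \<in> Lip0 M d z"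
  shows "lipschitz_with M d (lipnorm M d f) f"
proof -
  obtain C where "lipschitz_with M d C f" using assms by (auto simp: Lip0_iff)
  then show ?thesis by (rule lipschitz_with_lipnorm)
qed

lemma lipschitz_with_if_lipnorm_le:
  "f \<in> Lip0 M d z \<Longrightarrow> lipnorm M d f \<le> C \<Longrightarrow> lipschitz_with M d C f"
  by (rule lipschitz_with_mono[OF lipschitz_with_lipnorm_if_Lip0])

lemma lipnorm_le:
  assumes "a \<in> M" "b \<in> M" "a \<noteq> b" "lipschitz_with M d C f"
  shows "lipnorm M d f \<le> C"
  unfolding lipnorm_eq_Sup
proof (rule cSup_least)
  show "{norm (diff_quot d f p q) |p q. p \<in> M \<and> q \<in> M \<and> p \<noteq> q} \<noteq> {}"
    using assms(1-3) by blast
  fix x assume "x \<in> {norm (diff_quot d f p q) |p q. p \<in> M \<and> q \<in> M \<and> p \<noteq> q}"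
  then show "x \<le> C" using assms(4) unfolding lipschitz_with_iff_diff_quot by blast
qed

lemma lipnorm_nonneg:
  assumes "a \<in> M" "b \<in> M" "a \<noteq> b" "lipschitz_with M d C f"
  shows "0 \<le> lipnorm M d f"
  using norm_diff_quot_le_lipnorm[OF assms(4,1-3)] norm_ge_zero[of "diff_quot d f a b"]
  by linarith

lemma lipnorm_le_lipnorm_diff_add:
  assumes "a \<in> M" "b \<in> M" "a \<noteq> b" "f \<in> Lip0 M d z" "g \<in> Lip0 M d z"
  shows "lipnorm M d f \<le> lipnorm M d (\<lambda>x. f x - g x) + lipnorm M d g"
proof (rule lipnorm_le[OF assms(1-3)])
  have "lipschitz_with M d (lipnorm M d (\<lambda>x. f x - g x)) (\<lambda>x. f x - g x)"
    by (rule lipschitz_with_lipnorm_if_Lip0[OF Lip0_diff[OF assms(4,5)]])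
  moreover have "lipschitz_with M d (lipnorm M d g) (\<lambda>x. - g x)"
    using lipschitz_with_lipnorm_if_Lip0[OF assms(5)] by (simp add: lipschitz_with_minus_iff)
  ultimately show "lipschitz_with M d (lipnorm M d (\<lambda>x. f x - g x) + lipnorm M d g) f"
    using lipschitz_with_diff[of M d _ "\<lambda>x. f x - g x" _ "\<lambda>x. - g x"] by simp
qed

lemma lipnorm_zero_attains_toward:
  assumes "a \<in> M" "b \<in> M" "a \<noteq> b" "lipschitz_with M d C f" "lipnorm M d f = 0"
  shows "attains_toward M d f 0"
proof -
  have "norm (f a - f b) \<le> 0 * d a b"
    using lipschitz_with_lipnorm[OF assms(4)] assms(1,2,5) unfolding lipschitz_with_def by metis
  then have "(\<lambda>n. (1 / d a b) *\<^sub>R (f a - f b)) \<longlonglongrightarrow> 0" by simp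
  then show ?thesis
    unfolding attains_toward_def using assms(1-3,5) by force
qed

lemma dense_NA_if_approx_nonzero:
  fixes z :: 'a
  assumes "a \<in> M" "b \<in> M" "a \<noteq> b"
    and approx: "\<And>f e. f \<in> (Lip0 M d z :: ('a \<Rightarrow> 'b::real_normed_vector) set) \<Longrightarrow>
        0 < lipnorm M d f \<Longrightarrow> 0 < e \<Longrightarrow>
        \<exists>g \<in> NA M d z. lipnorm M d (\<lambda>x. f x - g x) < e"
  shows "dense_in_Lip0 M d z (NA M d z :: ('a \<Rightarrow> 'b) set)"
  unfolding dense_in_Lip0_def
proof (intro ballI allI impI)
  fix f :: "'a \<Rightarrow> 'b" and e :: real
  assume f: "f \<in> Lip0 M d z" and e: "0 < e"
  then obtain C where C: "lipschitz_with M d C f" by (auto simp: Lip0_iff)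
  show "\<exists>g\<in>NA M d z. lipnorm M d (\<lambda>x. f x - g x) < e"
  proof (cases "lipnorm M d f = 0")
    case True
    then have "f \<in> NA M d z"
      using f lipnorm_zero_attains_toward[OF assms(1-3) C] by (auto simp: NA_def)
    moreover have "lipnorm M d (\<lambda>x. f x - f x) \<le> 0"
      by (rule lipnorm_le[OF assms(1-3)]) (simp add: lipschitz_with_def)
    ultimately show ?thesis using e by (intro bexI[of _ f]) auto
  next
    case False
    then have "0 < lipnorm M d f" using lipnorm_nonneg[OF assms(1-3) C] by simp
    then show ?thesis using approx f e by blast
  qed
qed

lemma attains_toward_if_near_diff_quot:
  assumes g: "lipschitz_with M d K g"
    and u: "u \<longlonglongrightarrow> y" and y: "norm y = K"
    and near: "\<And>n. \<exists>p q. p \<in> M \<and> q \<in> M \<and> p \<noteq> q \<and>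
        norm (diff_quot d g p q - u n) \<le> c * (K - norm (u n))"
  shows "attains_toward M d g y"
proof -
  obtain p q where pq: "\<And>n. p n \<in> M \<and> q n \<in> M \<and> p n \<noteq> q n"
    and near_pq: "\<And>n. norm (diff_quot d g (p n) (q n) - u n) \<le> c * (K - norm (u n))"
    using near by metis
  have "(\<lambda>n. c * (K - norm (u n))) \<longlonglongrightarrow> c * (K - norm y)"
    by (intro tendsto_intros u)
  then have "(\<lambda>n. c * (K - norm (u n))) \<longlonglongrightarrow> 0" using y by simp
  then have "(\<lambda>n. diff_quot d g (p n) (q n) - u n) \<longlonglongrightarrow> 0"
    by (rule Lim_null_comparison[rotated]) (simp add: near_pq)
  from tendsto_add[OF this u] have lim: "(\<lambda>n. diff_quot d g (p n) (q n)) \<longlonglongrightarrow> y"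
    by simp
  have "\<forall>n\<ge>0. norm (diff_quot d g (p n) (q n)) \<le> lipnorm M d g"
    using pq norm_diff_quot_le_lipnorm[OF g] by blast
  then have "norm y \<le> lipnorm M d g" by (rule Lim_bounded[OF tendsto_norm[OF lim]])
  moreover have "lipnorm M d g \<le> K" using pq[of 0] lipnorm_le g by blast
  ultimately have "norm y = lipnorm M d g" using y by linarith
  then show ?thesis
    unfolding attains_toward_iff_diff_quot using pq lim by blast
qed

end

lemma Metric_space_pos_dist: "Metric_space M d \<Longrightarrow> pos_dist M d"
  by (simp add: pos_dist_def Metric_space.mdist_pos_less Metric_space.mdist_zero)

definition msum_emb :: "('i \<Rightarrow> 'a) \<Rightarrow> 'i \<Rightarrow> 'a \<Rightarrow> ('i \<times> 'a) option" where
  "msum_emb z i x = (if x = z i then None else Some (i, x))"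

definition msum_restr ::
    "('i \<Rightarrow> 'a set) \<Rightarrow> ('i \<Rightarrow> 'a) \<Rightarrow> (('i \<times> 'a) option \<Rightarrow> 'b::zero) \<Rightarrow> 'i \<Rightarrow> 'a \<Rightarrow> 'b" where
  "msum_restr M z H i x = (if x \<in> M i then H (msum_emb z i x) else 0)"

definition msum_glue :: "'i set \<Rightarrow> ('i \<Rightarrow> 'a \<Rightarrow> 'b::zero) \<Rightarrow> ('i \<times> 'a) option \<Rightarrow> 'b" where
  "msum_glue I h P = (case P of None \<Rightarrow> 0 | Some (i, x) \<Rightarrow> if i \<in> I then h i x else 0)"

lemma msum_emb_eq_iff [simp]: "msum_emb z i x = msum_emb z i y \<longleftrightarrow> x = y"
  by (simp add: msum_emb_def)

lemma msum_emb_base [simp]: "msum_emb z i (z i) = None"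
  by (simp add: msum_emb_def)

lemma msum_restr_diff:
  fixes F G :: "('i \<times> 'a) option \<Rightarrow> 'b::group_add"
  shows "msum_restr M z (\<lambda>P. F P - G P) i = (\<lambda>x. msum_restr M z F i x - msum_restr M z G i x)"
  by (simp add: msum_restr_def fun_eq_iff)

lemma msum_glue_diff:
  fixes h k :: "'i \<Rightarrow> 'a \<Rightarrow> 'b::group_add"
  shows "msum_glue I (\<lambda>i x. h i x - k i x) = (\<lambda>P. msum_glue I h P - msum_glue I k P)"
  by (simp add: msum_glue_def fun_eq_iff split: option.split)

definition msum_graft :: "'i set \<Rightarrow> ('i \<Rightarrow> 'a set) \<Rightarrow> ('i \<Rightarrow> 'a) \<Rightarrow>
    (('i \<times> 'a) option \<Rightarrow> 'b::real_normed_vector) \<Rightarrow> 'i \<Rightarrow> ('a \<Rightarrow> 'b) \<Rightarrow> real \<Rightarrow>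
    ('i \<times> 'a) option \<Rightarrow> 'b"
  where "msum_graft I M z F i0 g c =
    msum_glue I (\<lambda>i. if i = i0 then g else (\<lambda>x. c *\<^sub>R msum_restr M z F i x))"

locale metric_sum =
  fixes I :: "'i set" and M :: "'i \<Rightarrow> 'a set" and d :: "'i \<Rightarrow> 'a \<Rightarrow> 'a \<Rightarrow> real"
    and z :: "'i \<Rightarrow> 'a"
  assumes metric: "\<And>i. i \<in> I \<Longrightarrow> Metric_space (M i) (d i)"
    and base: "\<And>i. i \<in> I \<Longrightarrow> z i \<in> M i"
begin

abbreviation "Msum \<equiv> msum_carrier I M z"
abbreviation "Dsum \<equiv> msum_dist d z"

lemma component_pos_dist: "i \<in> I \<Longrightarrow> pos_dist (M i) (d i)"
  by (rule Metric_space_pos_dist[OF metric])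

lemma msum_emb_in: "i \<in> I \<Longrightarrow> x \<in> M i \<Longrightarrow> msum_emb z i x \<in> Msum"
  by (auto simp: msum_emb_def msum_carrier_def)

lemma Dsum_emb:
  "i \<in> I \<Longrightarrow> x \<in> M i \<Longrightarrow> y \<in> M i \<Longrightarrow> Dsum (msum_emb z i x) (msum_emb z i y) = d i x y"
  using base Metric_space.mdist_zero[OF metric] by (auto simp: msum_emb_def msum_dist_def)

lemma Dsum_emb_cross:
  "i \<noteq> j \<Longrightarrow> x \<noteq> z i \<Longrightarrow> y \<noteq> z j \<Longrightarrow>
    Dsum (msum_emb z i x) (msum_emb z j y) = d i x (z i) + d j (z j) y"
  by (simp add: msum_emb_def msum_dist_def)

lemma msum_pair_cases:
  assumes "P \<in> Msum" "Q \<in> Msum" "P \<noteq> Q"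
  obtains (same) i x y where "i \<in> I" "x \<in> M i" "y \<in> M i" "P = msum_emb z i x" "Q = msum_emb z i y"
  | (cross) i j x y where "i \<in> I" "j \<in> I" "i \<noteq> j" "x \<in> M i" "y \<in> M j" "x \<noteq> z i" "y \<noteq> z j"
      "P = msum_emb z i x" "Q = msum_emb z j y"
proof -
  have emb_Some: "Some (i, x) = msum_emb z i x" if "x \<noteq> z i" for i x
    using that by (simp add: msum_emb_def)
  show thesis
  proof (cases P)
    case None
    then obtain j y where "Q = Some (j, y)" "j \<in> I" "y \<in> M j" "y \<noteq> z j"
      using assms by (auto simp: msum_carrier_def)
    then show ?thesis using None same[of j "z j" y] base emb_Some by simp
  next
    case (Some a)
    then obtain i x where P: "P = Some (i, x)" "i \<in> I" "x \<in> M i" "x \<noteq> z i"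
      using assms by (auto simp: msum_carrier_def)
    show ?thesis
    proof (cases Q)
      case None
      then show ?thesis using P same[of i x "z i"] base emb_Some by simp
    next
      case (Some b)
      then obtain j y where Q: "Q = Some (j, y)" "j \<in> I" "y \<in> M j" "y \<noteq> z j"
        using assms by (auto simp: msum_carrier_def)
      show ?thesis
      proof (cases "i = j")
        case True
        then show ?thesis using P Q same[of i x y] emb_Some by simp
      next
        case False
        then show ?thesis using P Q cross[of i j x y] emb_Some by simp
      qed
    qed
  qed
qed

sublocale sum: pos_dist Msum Dsum
proof
  fix P Q assume PQ: "P \<in> Msum" "Q \<in> Msum" "P \<noteq> Q"
  then show "0 < Dsum P Q"
  proof (cases rule: msum_pair_cases)
    case (same i x y)
    then show ?thesis
      using PQ(3) Dsum_emb pos_dist.dist_pos[OF component_pos_dist] by auto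
  next
    case (cross i j x y)
    then have "0 < d i x (z i)" "0 < d j (z j) y"
      using base pos_dist.dist_pos[OF component_pos_dist] by auto
    then show ?thesis using cross Dsum_emb_cross by simp
  qed
next
  fix P assume "P \<in> Msum"
  then show "Dsum P P = 0"
    using Metric_space.mdist_zero[OF metric] by (auto simp: msum_carrier_def msum_dist_def)
qed

lemma msum_two_points:
  assumes "i \<in> I" "M i \<noteq> {z i}"
  obtains P Q where "P \<in> Msum" "Q \<in> Msum" "P \<noteq> Q"
proof -
  obtain x where x: "x \<in> M i" "x \<noteq> z i" using assms base by blast
  have "msum_emb z i x \<in> Msum" by (rule msum_emb_in[OF assms(1) x(1)])
  moreover have "None \<in> Msum" by (simp add: msum_carrier_def)
  moreover have "msum_emb z i x \<noteq> None" using x(2) by (simp add: msum_emb_def)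
  ultimately show thesis using that by blast
qed

lemma component_two_points:
  assumes "i \<in> I" "M i \<noteq> {z i}"
  obtains x y where "x \<in> M i" "y \<in> M i" "x \<noteq> y"
  using assms base by blast

lemma msum_glue_emb: "i \<in> I \<Longrightarrow> h i (z i) = 0 \<Longrightarrow> msum_glue I h (msum_emb z i x) = h i x"
  by (simp add: msum_glue_def msum_emb_def)

lemma msum_restr_glue:
  assumes "i \<in> I" "h i \<in> Lip0 (M i) (d i) (z i)"
  shows "msum_restr M z (msum_glue I h) i = h i"
  using assms msum_glue_emb[of i h] by (auto simp: msum_restr_def Lip0_def fun_eq_iff)

lemma msum_glue_restr:
  assumes "H \<in> Lip0 Msum Dsum None"
  shows "msum_glue I (msum_restr M z H) = H"
proof
  fix P
  have H0: "H None = 0" and H_out: "\<And>P. P \<notin> Msum \<Longrightarrow> H P = 0"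
    using assms by (auto simp: Lip0_def)
  show "msum_glue I (msum_restr M z H) P = H P"
  proof (cases P)
    case None
    then show ?thesis using H0 by (simp add: msum_glue_def)
  next
    case (Some a)
    then obtain i x where P: "P = Some (i, x)" by (cases a) auto
    show ?thesis
    proof (cases "P \<in> Msum")
      case True
      then show ?thesis
        using P by (auto simp: msum_glue_def msum_restr_def msum_emb_def msum_carrier_def)
    next
      case False
      then show ?thesis
        using P H0 H_out by (auto simp: msum_glue_def msum_restr_def msum_emb_def msum_carrier_def)
    qed
  qed
qed

lemma lipschitz_with_restr:
  assumes "i \<in> I" "lipschitz_with Msum Dsum C H"
  shows "lipschitz_with (M i) (d i) C (msum_restr M z H i)"
  unfolding lipschitz_with_def
proof (intro ballI)
  fix x y assume xy: "x \<in> M i" "y \<in> M i"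
  then have "norm (H (msum_emb z i x) - H (msum_emb z i y))
      \<le> C * Dsum (msum_emb z i x) (msum_emb z i y)"
    using assms(2) msum_emb_in[OF assms(1)] unfolding lipschitz_with_def by blast
  then show "norm (msum_restr M z H i x - msum_restr M z H i y) \<le> C * d i x y"
    using xy Dsum_emb[OF assms(1) xy] by (simp add: msum_restr_def)
qed

lemma msum_restr_in_Lip0:
  assumes "H \<in> Lip0 Msum Dsum None" "i \<in> I"
  shows "msum_restr M z H i \<in> Lip0 (M i) (d i) (z i)"
  using assms lipschitz_with_restr[OF assms(2)] base[OF assms(2)]
  by (auto simp: Lip0_iff msum_restr_def)

lemma lipschitz_with_glue:
  assumes h: "\<And>i. i \<in> I \<Longrightarrow> h i (z i) = 0 \<and> lipschitz_with (M i) (d i) C (h i)"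
  shows "lipschitz_with Msum Dsum C (msum_glue I h)"
  unfolding lipschitz_with_def
proof (intro ballI)
  fix P Q assume PQ: "P \<in> Msum" "Q \<in> Msum"
  show "norm (msum_glue I h P - msum_glue I h Q) \<le> C * Dsum P Q"
  proof (cases "P = Q")
    case True
    then show ?thesis using sum.dist_self[OF PQ(1)] by simp
  next
    case False
    with PQ show ?thesis
    proof (cases rule: msum_pair_cases)
      case (same i x y)
      then show ?thesis
        using h[of i] msum_glue_emb[of i h] Dsum_emb by (simp add: lipschitz_with_def)
    next
      case (cross i j x y)
      have "norm (h i x - h j y) \<le> norm (h i x - h i (z i)) + norm (h j (z j) - h j y)"
        using h[of i] h[of j] cross norm_triangle_ineq4[of "h i x" "h j y"]
        by (simp add: norm_minus_commute)
      also have "\<dots> \<le> C * d i x (z i) + C * d j (z j) y"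
      proof (rule add_mono)
        show "norm (h i x - h i (z i)) \<le> C * d i x (z i)"
          using h[of i] cross base[of i] unfolding lipschitz_with_def by blast
        show "norm (h j (z j) - h j y) \<le> C * d j (z j) y"
          using h[of j] cross base[of j] unfolding lipschitz_with_def by blast
      qed
      finally show ?thesis
        using cross h msum_glue_emb[of _ h] Dsum_emb_cross by (simp add: distrib_left)
    qed
  qed
qed

lemma msum_glue_in_Lip0:
  assumes "\<And>i. i \<in> I \<Longrightarrow> h i \<in> Lip0 (M i) (d i) (z i) \<and> lipschitz_with (M i) (d i) C (h i)"
  shows "msum_glue I h \<in> Lip0 Msum Dsum None"
proof -
  have "msum_glue I h P = 0" if "P \<notin> Msum" for P
    using that assms by (auto simp: msum_glue_def msum_carrier_def Lip0_def split: option.split)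
  moreover have "lipschitz_with Msum Dsum C (msum_glue I h)"
    using assms by (intro lipschitz_with_glue) (auto simp: Lip0_def)
  ultimately show ?thesis by (auto simp: Lip0_iff msum_glue_def)
qed

lemma lipnorm_restr_le:
  assumes i: "i \<in> I" "M i \<noteq> {z i}" and H: "lipschitz_with Msum Dsum C H"
  shows "lipnorm (M i) (d i) (msum_restr M z H i) \<le> lipnorm Msum Dsum H"
proof -
  obtain x y where "x \<in> M i" "y \<in> M i" "x \<noteq> y" using component_two_points[OF i] .
  then show ?thesis
    using pos_dist.lipnorm_le[OF component_pos_dist[OF i(1)]]
      lipschitz_with_restr[OF i(1) sum.lipschitz_with_lipnorm[OF H]] by blast
qed

lemma lipnorm_glue_le:
  assumes i: "i \<in> I" "M i \<noteq> {z i}"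
    and h: "\<And>i. i \<in> I \<Longrightarrow> h i (z i) = 0 \<and> lipschitz_with (M i) (d i) C (h i)"
  shows "lipnorm Msum Dsum (msum_glue I h) \<le> C"
proof -
  obtain P Q where "P \<in> Msum" "Q \<in> Msum" "P \<noteq> Q" using msum_two_points[OF i] .
  then show ?thesis using sum.lipnorm_le lipschitz_with_glue[OF h] by blast
qed

lemma diff_quot_emb:
  "i \<in> I \<Longrightarrow> x \<in> M i \<Longrightarrow> y \<in> M i \<Longrightarrow>
    diff_quot Dsum H (msum_emb z i x) (msum_emb z i y) = diff_quot (d i) (msum_restr M z H i) x y"
  by (simp add: diff_quot_def Dsum_emb msum_restr_def)

lemma diff_quot_emb_cross:
  assumes H0: "H None = 0" and ij: "i \<in> I" "j \<in> I" "i \<noteq> j"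
    and xy: "x \<in> M i" "y \<in> M j" "x \<noteq> z i" "y \<noteq> z j"
  obtains l where "0 \<le> l" "l \<le> 1"
    "diff_quot Dsum H (msum_emb z i x) (msum_emb z j y) =
       l *\<^sub>R diff_quot (d i) (msum_restr M z H i) x (z i)
       + (1 - l) *\<^sub>R diff_quot (d j) (msum_restr M z H j) (z j) y"
proof -
  define s t where "s = d i x (z i)" and "t = d j (z j) y"
  have "0 < s" "0 < t"
    unfolding s_def t_def using xy ij base pos_dist.dist_pos[OF component_pos_dist] by auto
  define l where "l = s / (s + t)"
  have "l * (1 / s) = 1 / (s + t)" "(1 - l) * (1 / t) = 1 / (s + t)"
    unfolding l_def using \<open>0 < s\<close> \<open>0 < t\<close> by (simp_all add: field_simps)
  then have "l *\<^sub>R diff_quot (d i) (msum_restr M z H i) x (z i)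
       + (1 - l) *\<^sub>R diff_quot (d j) (msum_restr M z H j) (z j) y
      = (1 / (s + t)) *\<^sub>R (H (msum_emb z i x) - H (msum_emb z j y))"
    using xy ij base H0
    by (simp add: diff_quot_def msum_restr_def s_def t_def algebra_simps)
  also have "\<dots> = diff_quot Dsum H (msum_emb z i x) (msum_emb z j y)"
    using Dsum_emb_cross[OF ij(3) xy(3,4)] by (simp add: diff_quot_def s_def t_def)
  finally show thesis
    using that[of l] \<open>0 < s\<close> \<open>0 < t\<close> by (simp add: l_def)
qed

lemma attains_toward_of_restr:
  assumes i: "i \<in> I" and y: "attains_toward (M i) (d i) (msum_restr M z H i) y"
    and norm_eq: "lipnorm Msum Dsum H = lipnorm (M i) (d i) (msum_restr M z H i)"
  shows "attains_toward Msum Dsum H y"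
proof -
  obtain p q where pq: "\<forall>n. p n \<in> M i \<and> q n \<in> M i \<and> p n \<noteq> q n"
    and lim: "(\<lambda>n. diff_quot (d i) (msum_restr M z H i) (p n) (q n)) \<longlonglongrightarrow> y"
    and norm_y: "norm y = lipnorm Msum Dsum H"
    using y norm_eq unfolding attains_toward_iff_diff_quot by auto
  have "(\<lambda>n. diff_quot Dsum H (msum_emb z i (p n)) (msum_emb z i (q n)))
      = (\<lambda>n. diff_quot (d i) (msum_restr M z H i) (p n) (q n))"
    using pq by (simp add: diff_quot_emb[OF i])
  with lim have "(\<lambda>n. diff_quot Dsum H (msum_emb z i (p n)) (msum_emb z i (q n))) \<longlonglongrightarrow> y"
    by simp
  then show ?thesis
    unfolding attains_toward_iff_diff_quot using pq norm_y msum_emb_in[OF i]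
    by (intro exI[of _ "\<lambda>n. msum_emb z i (p n)"] exI[of _ "\<lambda>n. msum_emb z i (q n)"]) auto
qed

lemma msum_glue_in_NA:
  assumes i0: "i0 \<in> I" "M i0 \<noteq> {z i0}" and NA: "h i0 \<in> NA (M i0) (d i0) (z i0)"
    and h: "\<And>i. i \<in> I \<Longrightarrow>
      h i \<in> Lip0 (M i) (d i) (z i) \<and> lipschitz_with (M i) (d i) (lipnorm (M i0) (d i0) (h i0)) (h i)"
  shows "msum_glue I h \<in> NA Msum Dsum None"
proof -
  have restr: "msum_restr M z (msum_glue I h) i0 = h i0"
    using msum_restr_glue i0(1) h by blast
  have h0: "\<And>i. i \<in> I \<Longrightarrow>
      h i (z i) = 0 \<and> lipschitz_with (M i) (d i) (lipnorm (M i0) (d i0) (h i0)) (h i)"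
    using h by (auto simp: Lip0_def)
  have "lipnorm Msum Dsum (msum_glue I h) = lipnorm (M i0) (d i0) (h i0)"
    using lipnorm_glue_le[OF i0 h0] lipnorm_restr_le[OF i0 lipschitz_with_glue[OF h0]] restr
    by simp
  moreover obtain y where "attains_toward (M i0) (d i0) (h i0) y" using NA by (auto simp: NA_def)
  ultimately have "attains_toward Msum Dsum (msum_glue I h) y"
    using attains_toward_of_restr[OF i0(1), of "msum_glue I h" y] restr by simp
  then show ?thesis using msum_glue_in_Lip0 h by (auto simp: NA_def)
qed

lemma scaleR_restr_in_Lip0:
  assumes F: "F \<in> Lip0 Msum Dsum None" and i: "i \<in> I" and "0 \<le> c"
  shows "(\<lambda>x. c *\<^sub>R msum_restr M z F i x) \<in> Lip0 (M i) (d i) (z i)"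
    and "lipschitz_with (M i) (d i) (c * lipnorm Msum Dsum F) (\<lambda>x. c *\<^sub>R msum_restr M z F i x)"
proof -
  show "(\<lambda>x. c *\<^sub>R msum_restr M z F i x) \<in> Lip0 (M i) (d i) (z i)"
    by (rule Lip0_scaleR[OF msum_restr_in_Lip0[OF F i]])
  have "lipschitz_with (M i) (d i) (lipnorm Msum Dsum F) (msum_restr M z F i)"
    by (rule lipschitz_with_restr[OF i sum.lipschitz_with_lipnorm_if_Lip0[OF F]])
  from lipschitz_with_scaleR[OF this, of c] \<open>0 \<le> c\<close>
  show "lipschitz_with (M i) (d i) (c * lipnorm Msum Dsum F) (\<lambda>x. c *\<^sub>R msum_restr M z F i x)"
    by simp
qed

lemma lipnorm_sub_msum_glue_le:
  assumes F: "F \<in> Lip0 Msum Dsum None" and i: "i \<in> I" "M i \<noteq> {z i}"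
    and h: "\<And>j. j \<in> I \<Longrightarrow>
      h j (z j) = 0 \<and> lipschitz_with (M j) (d j) C (\<lambda>x. msum_restr M z F j x - h j x)"
  shows "lipnorm Msum Dsum (\<lambda>P. F P - msum_glue I h P) \<le> C"
proof -
  have "msum_glue I (msum_restr M z F) = F" by (rule msum_glue_restr[OF F])
  then have eq: "(\<lambda>P. F P - msum_glue I h P) = msum_glue I (\<lambda>j x. msum_restr M z F j x - h j x)"
    by (simp only: msum_glue_diff)
  have "msum_restr M z F j (z j) - h j (z j) = 0 \<and>
      lipschitz_with (M j) (d j) C (\<lambda>x. msum_restr M z F j x - h j x)" if "j \<in> I" for j
    using h[OF that] msum_restr_in_Lip0[OF F that] by (simp add: Lip0_def)
  then show ?thesis unfolding eq by (rule lipnorm_glue_le[OF i])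
qed

lemma ex_component_lipnorm_gt:
  assumes H: "H \<in> Lip0 Msum Dsum None" and "0 < \<delta>"
    and nontriv: "\<And>i. i \<in> I \<Longrightarrow> M i \<noteq> {z i}" and "I \<noteq> {}"
  obtains i where "i \<in> I" "lipnorm Msum Dsum H - \<delta> < lipnorm (M i) (d i) (msum_restr M z H i)"
proof -
  have "\<not> (\<forall>i\<in>I. lipnorm (M i) (d i) (msum_restr M z H i) \<le> lipnorm Msum Dsum H - \<delta>)"
  proof
    assume le: "\<forall>i\<in>I. lipnorm (M i) (d i) (msum_restr M z H i) \<le> lipnorm Msum Dsum H - \<delta>"
    have "msum_restr M z H i (z i) = 0 \<and>
        lipschitz_with (M i) (d i) (lipnorm Msum Dsum H - \<delta>) (msum_restr M z H i)" if i: "i \<in> I" for i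
    proof
      show "msum_restr M z H i (z i) = 0" using msum_restr_in_Lip0[OF H i] by (simp add: Lip0_def)
      show "lipschitz_with (M i) (d i) (lipnorm Msum Dsum H - \<delta>) (msum_restr M z H i)"
        by (rule pos_dist.lipschitz_with_if_lipnorm_le[OF component_pos_dist[OF i]
              msum_restr_in_Lip0[OF H i]])
          (use le i in blast)
    qed
    moreover obtain i where "i \<in> I" using \<open>I \<noteq> {}\<close> by blast
    ultimately have "lipnorm Msum Dsum (msum_glue I (msum_restr M z H)) \<le> lipnorm Msum Dsum H - \<delta>"
      using lipnorm_glue_le nontriv by blast
    then show False using msum_glue_restr[OF H] \<open>0 < \<delta>\<close> by simp
  qed
  then show thesis using that by (meson not_le)
qed

lemma msum_graft_in_NA:
  assumes F: "F \<in> Lip0 Msum Dsum None" and i0: "i0 \<in> I" "M i0 \<noteq> {z i0}"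
    and g: "g \<in> NA (M i0) (d i0) (z i0)"
    and c: "0 \<le> c" "c * lipnorm Msum Dsum F \<le> lipnorm (M i0) (d i0) g"
  shows "msum_graft I M z F i0 g c \<in> NA Msum Dsum None"
proof -
  interpret Mi0: pos_dist "M i0" "d i0" by (rule component_pos_dist[OF i0(1)])
  define K where "K = lipnorm (M i0) (d i0) g"
  define h where "h = (\<lambda>i. if i = i0 then g else (\<lambda>x. c *\<^sub>R msum_restr M z F i x))"
  have g_Lip0: "g \<in> Lip0 (M i0) (d i0) (z i0)" using g by (simp add: NA_def)
  have "h i \<in> Lip0 (M i) (d i) (z i) \<and> lipschitz_with (M i) (d i) K (h i)" if i: "i \<in> I" for i
  proof (cases "i = i0")
    case True
    then show ?thesis using g_Lip0 Mi0.lipschitz_with_lipnorm_if_Lip0[OF g_Lip0]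
      unfolding h_def K_def by simp
  next
    case False
    have "lipschitz_with (M i) (d i) K (\<lambda>x. c *\<^sub>R msum_restr M z F i x)"
      using scaleR_restr_in_Lip0(2)[OF F i c(1)] c(2) unfolding K_def
      by (rule pos_dist.lipschitz_with_mono[OF component_pos_dist[OF i]])
    then show ?thesis using False scaleR_restr_in_Lip0(1)[OF F i c(1)] unfolding h_def by simp
  qed
  moreover have "h i0 = g" by (simp add: h_def)
  ultimately have "msum_glue I h \<in> NA Msum Dsum None"
    using msum_glue_in_NA[OF i0, of h] g unfolding K_def by simp
  then show ?thesis unfolding msum_graft_def h_def .
qed

lemma lipnorm_sub_msum_graft_le:
  assumes F: "F \<in> Lip0 Msum Dsum None" and i0: "i0 \<in> I" "M i0 \<noteq> {z i0}"
    and g: "g \<in> Lip0 (M i0) (d i0) (z i0)"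
    and fg: "lipnorm (M i0) (d i0) (\<lambda>x. msum_restr M z F i0 x - g x) \<le> r"
    and c: "0 \<le> 1 - c" "(1 - c) * lipnorm Msum Dsum F \<le> r"
  shows "lipnorm Msum Dsum (\<lambda>P. F P - msum_graft I M z F i0 g c P) \<le> r"
proof -
  define h where "h = (\<lambda>i. if i = i0 then g else (\<lambda>x. c *\<^sub>R msum_restr M z F i x))"
  have "h i (z i) = 0 \<and> lipschitz_with (M i) (d i) r (\<lambda>x. msum_restr M z F i x - h i x)"
    if i: "i \<in> I" for i
  proof (cases "i = i0")
    case True
    have "lipschitz_with (M i0) (d i0) r (\<lambda>x. msum_restr M z F i0 x - g x)"
      using Lip0_diff[OF msum_restr_in_Lip0[OF F i0(1)] g] fg
      by (rule pos_dist.lipschitz_with_if_lipnorm_le[OF component_pos_dist[OF i0(1)]])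
    then show ?thesis using True g unfolding h_def by (simp add: Lip0_def)
  next
    case False
    then have hi: "h i = (\<lambda>x. c *\<^sub>R msum_restr M z F i x)" by (simp add: h_def)
    have eq: "(\<lambda>x. (1 - c) *\<^sub>R msum_restr M z F i x) = (\<lambda>x. msum_restr M z F i x - h i x)"
      unfolding hi by (simp add: fun_eq_iff scaleR_diff_left)
    have "h i (z i) = 0" using msum_restr_in_Lip0[OF F i] unfolding hi by (simp add: Lip0_def)
    moreover have "lipschitz_with (M i) (d i) r (\<lambda>x. (1 - c) *\<^sub>R msum_restr M z F i x)"
      using scaleR_restr_in_Lip0(2)[OF F i c(1)] c(2)
      by (rule pos_dist.lipschitz_with_mono[OF component_pos_dist[OF i]])
    ultimately show ?thesis unfolding eq ..
  qed
  then have "lipnorm Msum Dsum (\<lambda>P. F P - msum_glue I h P) \<le> r"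
    by (rule lipnorm_sub_msum_glue_le[OF F i0])
  then show ?thesis unfolding msum_graft_def h_def .
qed

lemma NA_near_if_component_near:
  assumes F: "F \<in> Lip0 Msum Dsum None" and i0: "i0 \<in> I" "M i0 \<noteq> {z i0}"
    and g: "g \<in> NA (M i0) (d i0) (z i0)"
    and fg: "lipnorm (M i0) (d i0) (\<lambda>x. msum_restr M z F i0 x - g x) \<le> r"
    and g_large: "lipnorm Msum Dsum F - r \<le> lipnorm (M i0) (d i0) g"
    and r: "0 \<le> r" "r < lipnorm Msum Dsum F"
  shows "\<exists>G \<in> NA Msum Dsum None. lipnorm Msum Dsum (\<lambda>P. F P - G P) \<le> r"
proof -
  define L c where "L = lipnorm Msum Dsum F" and "c = 1 - r / L"
  have "0 < L" using r unfolding L_def by linarith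
  then have cL: "c * L = L - r" by (simp add: c_def field_simps)
  have "0 \<le> c" using \<open>0 < L\<close> r unfolding L_def c_def by (simp add: field_simps)
  moreover have "c * L \<le> lipnorm (M i0) (d i0) g" using cL g_large unfolding L_def by linarith
  moreover have "0 \<le> 1 - c" using \<open>0 < L\<close> r unfolding c_def by simp
  moreover have "(1 - c) * L \<le> r" using cL by (simp add: algebra_simps)
  moreover have "g \<in> Lip0 (M i0) (d i0) (z i0)" using g by (simp add: NA_def)
  ultimately show ?thesis
    using msum_graft_in_NA[OF F i0 g] lipnorm_sub_msum_graft_le[OF F i0 _ fg] unfolding L_def
    by blast
qed

lemma dense_NA_msum_if_dense_NA_components:
  assumes dense: "\<forall>i\<in>I. dense_in_Lip0 (M i) (d i) (z i)
      (NA (M i) (d i) (z i) :: ('a \<Rightarrow> 'b::real_normed_vector) set)"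
    and nontriv: "\<And>i. i \<in> I \<Longrightarrow> M i \<noteq> {z i}" and "I \<noteq> {}"
  shows "dense_in_Lip0 Msum Dsum None (NA Msum Dsum None :: (('i \<times> 'a) option \<Rightarrow> 'b) set)"
proof -
  obtain i1 where "i1 \<in> I" using \<open>I \<noteq> {}\<close> by blast
  obtain P Q where PQ: "P \<in> Msum" "Q \<in> Msum" "P \<noteq> Q"
    using msum_two_points[OF \<open>i1 \<in> I\<close> nontriv[OF \<open>i1 \<in> I\<close>]] .
  show ?thesis
  proof (rule sum.dense_NA_if_approx_nonzero[OF PQ])
    fix F :: "('i \<times> 'a) option \<Rightarrow> 'b" and e :: real
    assume F: "F \<in> Lip0 Msum Dsum None" and L: "0 < lipnorm Msum Dsum F" and e: "0 < e"
    define \<delta> where "\<delta> = min (e / 3) (lipnorm Msum Dsum F / 3)"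
    have \<delta>: "0 < \<delta>" "2 * \<delta> < lipnorm Msum Dsum F" "2 * \<delta> < e"
      using L e unfolding \<delta>_def by auto
    obtain i0 where i0: "i0 \<in> I"
      and big: "lipnorm Msum Dsum F - \<delta> < lipnorm (M i0) (d i0) (msum_restr M z F i0)"
      using ex_component_lipnorm_gt[OF F \<delta>(1) nontriv \<open>I \<noteq> {}\<close>] by blast
    interpret Mi0: pos_dist "M i0" "d i0" by (rule component_pos_dist[OF i0])
    have f: "msum_restr M z F i0 \<in> Lip0 (M i0) (d i0) (z i0)" by (rule msum_restr_in_Lip0[OF F i0])
    obtain g where g: "g \<in> NA (M i0) (d i0) (z i0)"
      and fg: "lipnorm (M i0) (d i0) (\<lambda>x. msum_restr M z F i0 x - g x) < \<delta>"
      using dense i0 f \<delta>(1) unfolding dense_in_Lip0_def by blast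
    obtain a b where ab: "a \<in> M i0" "b \<in> M i0" "a \<noteq> b"
      using component_two_points[OF i0 nontriv[OF i0]] .
    have "g \<in> Lip0 (M i0) (d i0) (z i0)" using g by (simp add: NA_def)
    with ab f have "lipnorm (M i0) (d i0) (msum_restr M z F i0)
        \<le> lipnorm (M i0) (d i0) (\<lambda>x. msum_restr M z F i0 x - g x) + lipnorm (M i0) (d i0) g"
      by (rule Mi0.lipnorm_le_lipnorm_diff_add)
    then have "lipnorm Msum Dsum F - 2 * \<delta> \<le> lipnorm (M i0) (d i0) g" using big fg by linarith
    then obtain G where G: "G \<in> NA Msum Dsum None"
      and FG: "lipnorm Msum Dsum (\<lambda>P. F P - G P) \<le> 2 * \<delta>"
      using NA_near_if_component_near[OF F i0 nontriv[OF i0] g _ _ _ \<delta>(2)] fg \<delta>(1) by auto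
    have "lipnorm Msum Dsum (\<lambda>P. F P - G P) < e" using FG \<delta>(3) by linarith
    with G show "\<exists>G\<in>NA Msum Dsum None. lipnorm Msum Dsum (\<lambda>P. F P - G P) < e" by blast
  qed
qed

lemma msum_glue_single:
  fixes f :: "'a \<Rightarrow> 'b::real_normed_vector"
  assumes i: "i \<in> I" and f: "f \<in> Lip0 (M i) (d i) (z i)"
  defines "F \<equiv> msum_glue I (\<lambda>j. if j = i then f else (\<lambda>_. 0))"
  shows "F \<in> Lip0 Msum Dsum None"
    and "\<And>j. j \<in> I \<Longrightarrow> msum_restr M z F j = (if j = i then f else (\<lambda>_. 0))"
proof -
  obtain C where "lipschitz_with (M i) (d i) C f" using f by (auto simp: Lip0_iff)
  then have f_C: "lipschitz_with (M i) (d i) (max C 0) f"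
    by (rule pos_dist.lipschitz_with_mono[OF component_pos_dist[OF i]]) simp
  have zero: "(\<lambda>_. 0 :: 'b) \<in> Lip0 (M j) (d j) (z j) \<and>
      lipschitz_with (M j) (d j) (max C 0) (\<lambda>_. 0 :: 'b)"
    if "j \<in> I" for j
  proof
    have lip_0: "lipschitz_with (M j) (d j) 0 (\<lambda>_. 0 :: 'b)" by (simp add: lipschitz_with_def)
    then show "(\<lambda>_. 0 :: 'b) \<in> Lip0 (M j) (d j) (z j)" unfolding Lip0_iff by blast
    from lip_0 show "lipschitz_with (M j) (d j) (max C 0) (\<lambda>_. 0 :: 'b)"
      by (rule pos_dist.lipschitz_with_mono[OF component_pos_dist[OF that]]) simp
  qed
  have h: "(if j = i then f else (\<lambda>_. 0)) \<in> Lip0 (M j) (d j) (z j) \<and>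
      lipschitz_with (M j) (d j) (max C 0) (if j = i then f else (\<lambda>_. 0))" if "j \<in> I" for j
    using f f_C zero[OF that] by simp
  show "F \<in> Lip0 Msum Dsum None" unfolding F_def by (rule msum_glue_in_Lip0[OF h])
  show "msum_restr M z F j = (if j = i then f else (\<lambda>_. 0))" if "j \<in> I" for j
    unfolding F_def
    using msum_restr_glue[of j "\<lambda>j. if j = i then f else (\<lambda>_. 0)", OF that conjunct1[OF h[OF that]]]
    by simp
qed

lemma diff_quot_msum_cases:
  assumes H0: "H None = 0" and PQ: "P \<in> Msum" "Q \<in> Msum" "P \<noteq> Q"
  obtains (same) j x y where "j \<in> I" "x \<in> M j" "y \<in> M j" "x \<noteq> y"
      "diff_quot Dsum H P Q = diff_quot (d j) (msum_restr M z H j) x y"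
  | (cross) j k x y l where "j \<in> I" "k \<in> I" "j \<noteq> k" "x \<in> M j" "y \<in> M k" "x \<noteq> z j" "y \<noteq> z k"
      "0 \<le> l" "l \<le> 1"
      "diff_quot Dsum H P Q = l *\<^sub>R diff_quot (d j) (msum_restr M z H j) x (z j)
         + (1 - l) *\<^sub>R diff_quot (d k) (msum_restr M z H k) (z k) y"
  using PQ
proof (cases rule: msum_pair_cases)
  case (same j x y)
  then show thesis using PQ(3) diff_quot_emb[OF same(1-3), of H] that(1)[of j x y] by blast
next
  case (cross j k x y)
  then show thesis
    using diff_quot_emb_cross[where H=H, OF H0 cross(1-7)] that(2)[OF cross(1-7)] by blast
qed

lemma diff_quot_msum_split:
  assumes H0: "H None = 0" and i: "i \<in> I" "M i \<noteq> {z i}"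
    and Hj: "\<And>j. j \<in> I \<Longrightarrow> j \<noteq> i \<Longrightarrow> lipschitz_with (M j) (d j) e (msum_restr M z H j)"
    and "0 \<le> e" and PQ: "P \<in> Msum" "Q \<in> Msum" "P \<noteq> Q"
  obtains l w a b where "0 \<le> l" "l \<le> 1" "norm w \<le> e" "a \<in> M i" "b \<in> M i" "a \<noteq> b"
    "diff_quot Dsum H P Q = l *\<^sub>R w + (1 - l) *\<^sub>R diff_quot (d i) (msum_restr M z H i) a b"
proof -
  note split = that
  let ?q = "diff_quot Dsum H P Q"
  have small: "norm (diff_quot (d j) (msum_restr M z H j) x y) \<le> e"
    if "j \<in> I" "j \<noteq> i" "x \<in> M j" "y \<in> M j" "x \<noteq> y" for j x y
    using Hj[OF that(1,2)] that(3-5)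
    unfolding pos_dist.lipschitz_with_iff_diff_quot[OF component_pos_dist[OF that(1)]] by blast
  obtain a0 b0 where ab0: "a0 \<in> M i" "b0 \<in> M i" "a0 \<noteq> b0" using component_two_points[OF i] .
  have small_q: thesis if "norm ?q \<le> e"
    using that ab0 by (intro split[of 1 ?q a0 b0]) simp_all
  from H0 PQ show thesis
  proof (cases rule: diff_quot_msum_cases)
    case (same j x y)
    show thesis
    proof (cases "j = i")
      case True
      then show thesis using same \<open>0 \<le> e\<close> by (intro split[of 0 0 x y]) simp_all
    next
      case False
      then show thesis using same small[OF same(1) False same(2-4)] by (intro small_q) simp
    qed
  next
    case (cross j k x y l)
    let ?u = "diff_quot (d j) (msum_restr M z H j) x (z j)"
      and ?w = "diff_quot (d k) (msum_restr M z H k) (z k) y"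
    consider "j = i" | "k = i" | "j \<noteq> i" "k \<noteq> i" by blast
    then show thesis
    proof cases
      case 1
      then have "norm ?w \<le> e" using small[of k "z k" y] cross base by simp
      then show thesis
        using 1 cross base by (intro split[of "1 - l" ?w x "z i"]) (simp_all add: add.commute)
    next
      case 2
      then have "norm ?u \<le> e" using small[of j x "z j"] cross base by simp
      then show thesis using 2 cross base by (intro split[of l ?u "z i" y]) simp_all
    next
      case 3
      have "norm ?q \<le> l * norm ?u + (1 - l) * norm ?w"
        using cross norm_triangle_ineq[of "l *\<^sub>R ?u" "(1 - l) *\<^sub>R ?w"] by simp
      also have "\<dots> \<le> e"
        using small[of j x "z j"] small[of k "z k" y] cross base 3 by (intro convex_bound_le) auto
      finally show thesis by (rule small_q)
    qed
  qed
qed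

lemma near_component_diff_quot:
  assumes H0: "H None = 0" and i: "i \<in> I" "M i \<noteq> {z i}"
    and Hi: "lipschitz_with (M i) (d i) K (msum_restr M z H i)"
    and Hj: "\<And>j. j \<in> I \<Longrightarrow> j \<noteq> i \<Longrightarrow> lipschitz_with (M j) (d j) e (msum_restr M z H j)"
    and e: "0 \<le> e" "e < K" and PQ: "P \<in> Msum" "Q \<in> Msum" "P \<noteq> Q"
  shows "\<exists>a b. a \<in> M i \<and> b \<in> M i \<and> a \<noteq> b \<and>
    norm (diff_quot (d i) (msum_restr M z H i) a b - diff_quot Dsum H P Q)
      \<le> (e + K) / (K - e) * (K - norm (diff_quot Dsum H P Q))"
proof -
  obtain l w a b where l: "0 \<le> l" "l \<le> 1" and w: "norm w \<le> e" and ab: "a \<in> M i" "b \<in> M i" "a \<noteq> b"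
    and q: "diff_quot Dsum H P Q = l *\<^sub>R w + (1 - l) *\<^sub>R diff_quot (d i) (msum_restr M z H i) a b"
    using diff_quot_msum_split[OF H0 i Hj e(1) PQ] by blast
  have "norm (diff_quot (d i) (msum_restr M z H i) a b) \<le> K"
    using Hi ab unfolding pos_dist.lipschitz_with_iff_diff_quot[OF component_pos_dist[OF i(1)]]
    by blast
  from norm_sub_le_of_convex_combination[OF q l w this e(2)] ab show ?thesis
    by (metis norm_minus_commute)
qed

lemma msum_restr_in_NA:
  assumes G: "G \<in> NA Msum Dsum None" and i: "i \<in> I" "M i \<noteq> {z i}"
    and Gj: "\<And>j. j \<in> I \<Longrightarrow> j \<noteq> i \<Longrightarrow> lipschitz_with (M j) (d j) e (msum_restr M z G j)"
    and e: "0 \<le> e" "e < lipnorm Msum Dsum G"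
  shows "msum_restr M z G i \<in> NA (M i) (d i) (z i)"
proof -
  interpret Mi: pos_dist "M i" "d i" by (rule component_pos_dist[OF i(1)])
  define K g where "K = lipnorm Msum Dsum G" and "g = msum_restr M z G i"
  have G_Lip0: "G \<in> Lip0 Msum Dsum None" using G by (simp add: NA_def)
  then have G0: "G None = 0" by (simp add: Lip0_def)
  have g_K: "lipschitz_with (M i) (d i) K g"
    unfolding g_def K_def
    by (rule lipschitz_with_restr[OF i(1) sum.lipschitz_with_lipnorm_if_Lip0[OF G_Lip0]])
  obtain y P Q where PQ: "\<forall>n. P n \<in> Msum \<and> Q n \<in> Msum \<and> P n \<noteq> Q n"
    and lim: "(\<lambda>n. diff_quot Dsum G (P n) (Q n)) \<longlonglongrightarrow> y" and "norm y = K"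
    using G unfolding NA_def attains_toward_iff_diff_quot K_def by blast
  have "attains_toward (M i) (d i) g y"
  proof (rule Mi.attains_toward_if_near_diff_quot[OF g_K lim \<open>norm y = K\<close>])
    fix n
    have "P n \<in> Msum" "Q n \<in> Msum" "P n \<noteq> Q n" using PQ by auto
    then show "\<exists>p q. p \<in> M i \<and> q \<in> M i \<and> p \<noteq> q \<and>
        norm (diff_quot (d i) g p q - diff_quot Dsum G (P n) (Q n))
          \<le> (e + K) / (K - e) * (K - norm (diff_quot Dsum G (P n) (Q n)))"
      unfolding g_def
      using near_component_diff_quot[OF G0 i g_K[unfolded g_def] Gj e[unfolded K_def[symmetric]]]
      by blast
  qed
  then show ?thesis using msum_restr_in_Lip0[OF G_Lip0 i(1)] unfolding g_def by (auto simp: NA_def)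
qed

lemma msum_glue_single_approx:
  fixes f :: "'a \<Rightarrow> 'b::real_normed_vector"
  assumes i: "i \<in> I" "M i \<noteq> {z i}" and f: "f \<in> Lip0 (M i) (d i) (z i)"
    and G: "G \<in> Lip0 Msum Dsum None"
  defines "F \<equiv> msum_glue I (\<lambda>j. if j = i then f else (\<lambda>_. 0))"
  defines "e \<equiv> lipnorm Msum Dsum (\<lambda>P. F P - G P)"
  shows "0 \<le> e" and "lipnorm (M i) (d i) (\<lambda>x. f x - msum_restr M z G i x) \<le> e"
    and "\<And>j. j \<in> I \<Longrightarrow> j \<noteq> i \<Longrightarrow> lipschitz_with (M j) (d j) e (msum_restr M z G j)"
proof -
  have F: "F \<in> Lip0 Msum Dsum None"
    and restr_F: "\<And>j. j \<in> I \<Longrightarrow> msum_restr M z F j = (if j = i then f else (\<lambda>_. 0))"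
    using msum_glue_single[OF i(1) f] unfolding F_def by blast+
  have FG: "lipschitz_with Msum Dsum e (\<lambda>P. F P - G P)"
    unfolding e_def by (rule sum.lipschitz_with_lipnorm_if_Lip0[OF Lip0_diff[OF F G]])
  obtain P Q where "P \<in> Msum" "Q \<in> Msum" "P \<noteq> Q" using msum_two_points[OF i] .
  then show "0 \<le> e" using FG unfolding e_def by (rule sum.lipnorm_nonneg)
  show "lipnorm (M i) (d i) (\<lambda>x. f x - msum_restr M z G i x) \<le> e"
    using lipnorm_restr_le[OF i FG] restr_F[OF i(1)] unfolding e_def msum_restr_diff by simp
  show "lipschitz_with (M j) (d j) e (msum_restr M z G j)" if "j \<in> I" "j \<noteq> i" for j
    using lipschitz_with_restr[OF that(1) FG] restr_F[OF that(1)] that(2)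
    unfolding msum_restr_diff by (simp add: lipschitz_with_minus_iff)
qed

lemma dense_NA_component_if_dense_NA_msum:
  assumes dense: "dense_in_Lip0 Msum Dsum None
      (NA Msum Dsum None :: (('i \<times> 'a) option \<Rightarrow> 'b::real_normed_vector) set)"
    and i: "i \<in> I" "M i \<noteq> {z i}"
  shows "dense_in_Lip0 (M i) (d i) (z i) (NA (M i) (d i) (z i) :: ('a \<Rightarrow> 'b) set)"
proof -
  interpret Mi: pos_dist "M i" "d i" by (rule component_pos_dist[OF i(1)])
  obtain a b where ab: "a \<in> M i" "b \<in> M i" "a \<noteq> b" using component_two_points[OF i] .
  show ?thesis
  proof (rule Mi.dense_NA_if_approx_nonzero[OF ab])
    fix f :: "'a \<Rightarrow> 'b" and e :: real
    assume f: "f \<in> Lip0 (M i) (d i) (z i)" and L: "0 < lipnorm (M i) (d i) f" and e: "0 < e"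
    define F where "F = msum_glue I (\<lambda>j. if j = i then f else (\<lambda>_. 0))"
    have "F \<in> Lip0 Msum Dsum None" unfolding F_def by (rule msum_glue_single(1)[OF i(1) f])
    then obtain G where G: "G \<in> NA Msum Dsum None"
      and FG: "lipnorm Msum Dsum (\<lambda>P. F P - G P) < min e (lipnorm (M i) (d i) f / 3)"
      using dense e L unfolding dense_in_Lip0_def
      by (metis min_less_iff_conj zero_less_divide_iff zero_less_numeral)
    define e2 g where "e2 = lipnorm Msum Dsum (\<lambda>P. F P - G P)" and "g = msum_restr M z G i"
    have e2: "e2 < e" "e2 < lipnorm (M i) (d i) f / 3" using FG unfolding e2_def by simp_all
    have G_Lip0: "G \<in> Lip0 Msum Dsum None" using G by (simp add: NA_def)
    note approx = msum_glue_single_approx[OF i f G_Lip0, folded F_def, folded e2_def g_def]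
    have g: "g \<in> Lip0 (M i) (d i) (z i)"
      unfolding g_def by (rule msum_restr_in_Lip0[OF G_Lip0 i(1)])
    have "lipnorm (M i) (d i) f \<le> lipnorm (M i) (d i) (\<lambda>x. f x - g x) + lipnorm (M i) (d i) g"
      by (rule Mi.lipnorm_le_lipnorm_diff_add[OF ab f g])
    also have "\<dots> \<le> e2 + lipnorm Msum Dsum G"
      using approx(2) lipnorm_restr_le[OF i sum.lipschitz_with_lipnorm_if_Lip0[OF G_Lip0]]
      unfolding g_def by simp
    finally have "e2 < lipnorm Msum Dsum G" using e2(2) L by linarith
    then have "g \<in> NA (M i) (d i) (z i)"
      unfolding g_def using msum_restr_in_NA[OF G i approx(3) approx(1)] by blast
    moreover have "lipnorm (M i) (d i) (\<lambda>x. f x - g x) < e" using approx(2) e2(1) by linarith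
    ultimately show "\<exists>g \<in> NA (M i) (d i) (z i). lipnorm (M i) (d i) (\<lambda>x. f x - g x) < e" by blast
  qed
qed

end

theorem theorem3p5:
  fixes I :: "'i set" and M :: "'i \<Rightarrow> 'a set" and d :: "'i \<Rightarrow> 'a \<Rightarrow> 'a \<Rightarrow> real"
    and z :: "'i \<Rightarrow> 'a"
  assumes metric: "\<And>i. i \<in> I \<Longrightarrow> Metric_space (M i) (d i)"
    and complete: "\<And>i. i \<in> I \<Longrightarrow> Metric_space.mcomplete (M i) (d i)"
    and base: "\<And>i. i \<in> I \<Longrightarrow> z i \<in> M i"
    and nontriv: "\<And>i. i \<in> I \<Longrightarrow> M i \<noteq> {z i}"
    and Ine: "I \<noteq> {}"
  shows "(\<forall>i\<in>I. dense_in_Lip0 (M i) (d i) (z i) (NA (M i) (d i) (z i) :: ('a \<Rightarrow> 'b::banach) set))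
     \<longleftrightarrow> dense_in_Lip0 (msum_carrier I M z) (msum_dist d z) None
           (NA (msum_carrier I M z) (msum_dist d z) None :: (('i \<times> 'a) option \<Rightarrow> 'b) set)"
proof -
  interpret metric_sum I M d z using metric base by (rule metric_sum.intro)
  show ?thesis
  proof
    assume "\<forall>i\<in>I. dense_in_Lip0 (M i) (d i) (z i) (NA (M i) (d i) (z i) :: ('a \<Rightarrow> 'b) set)"
    then show "dense_in_Lip0 Msum Dsum None (NA Msum Dsum None :: (('i \<times> 'a) option \<Rightarrow> 'b) set)"
      using nontriv Ine by (rule dense_NA_msum_if_dense_NA_components)
  next
    assume "dense_in_Lip0 Msum Dsum None (NA Msum Dsum None :: (('i \<times> 'a) option \<Rightarrow> 'b) set)"
    then show "\<forall>i\<in>I. dense_in_Lip0 (M i) (d i) (z i) (NA (M i) (d i) (z i) :: ('a \<Rightarrow> 'b) set)"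
      using nontriv dense_NA_component_if_dense_NA_msum by blast
  qed
qed

end
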